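(* Let $G=A_n$ or $S_n$ with $n\ge 5$, acting naturally on the set of $k$-element subsets of $\{1,\dots,n\}$, where $1\le k<n/2$. Then $G$ is $\tfrac{3}{2}$-transitive if and only if either $k=1$, or $n=7$ and $k=2$.
   Context: A finite transitive permutation group $G$ on $\Omega$ is $\tfrac{3}{2}$-transitive if for $\alpha\in\Omega$ all orbits of $G_\alpha$ on $\Omega\setminus\{\alpha\}$ have the same size, greater than $1$. *)

theory Defs
  imports "HOL-Combinatorics.Permutations"
begin

definition stabiliser :: "'g set \<Rightarrow> ('g \<Rightarrow> 'x \<Rightarrow> 'x) \<Rightarrow> 'x \<Rightarrow> 'g set" where
  "stabiliser G act a = {g \<in> G. act g a = a}"

definition orbit_of :: "'g set \<Rightarrow> ('g \<Rightarrow> 'x \<Rightarrow> 'x) \<Rightarrow> 'x \<Rightarrow> 'x set" where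
  "orbit_of H act b = {act h b | h. h \<in> H}"

definition transitive_on :: "'g set \<Rightarrow> ('g \<Rightarrow> 'x \<Rightarrow> 'x) \<Rightarrow> 'x set \<Rightarrow> bool" where
  "transitive_on G act \<Omega> \<longleftrightarrow> \<Omega> \<noteq> {} \<and> (\<forall>a\<in>\<Omega>. \<forall>b\<in>\<Omega>. \<exists>g\<in>G. act g a = b)"

definition three_halves_transitive :: "'g set \<Rightarrow> ('g \<Rightarrow> 'x \<Rightarrow> 'x) \<Rightarrow> 'x set \<Rightarrow> bool" where
  "three_halves_transitive G act \<Omega> \<longleftrightarrow> transitive_on G act \<Omega> \<and>
     (\<forall>a\<in>\<Omega>. \<forall>b\<in>\<Omega> - {a}. \<forall>c\<in>\<Omega> - {a}.
        card (orbit_of (stabiliser G act a) act b) = card (orbit_of (stabiliser G act a) act c)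
        \<and> card (orbit_of (stabiliser G act a) act b) > 1)"

definition sym_grp :: "nat \<Rightarrow> (nat \<Rightarrow> nat) set" where
  "sym_grp n = {p. p permutes {1..n}}"

definition alt_grp :: "nat \<Rightarrow> (nat \<Rightarrow> nat) set" where
  "alt_grp n = {p. p permutes {1..n} \<and> evenperm p}"

definition k_subsets :: "nat \<Rightarrow> nat \<Rightarrow> nat set set" where
  "k_subsets n k = {B. B \<subseteq> {1..n} \<and> card B = k}"

definition set_action :: "(nat \<Rightarrow> nat) \<Rightarrow> nat set \<Rightarrow> nat set" where
  "set_action g B = g ` B"

end

theory Submission
  imports Defs
begin

text \<open>In S_n the stabiliser of a k-set B moves a k-set C exactly onto the k-sets D with
  |D \<inter> B| = |C \<inter> B|; for n \<ge> 5 two points lie in the same cell of the partition cut out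
  by B and C, and composing with their transposition shows that A_n has the same orbits.
  So the suborbits at B are indexed by i = |C \<inter> B| < k and have lengths
  binom(k,i) binom(n-k,k-i). For k \<ge> 2 equality of the lengths for i = k-1 and i = k-2 reads
  k m = binom(k,2) binom(m,2) with m = n - k > k, i.e. (k-1)(m-1) = 4, which forces k = 2, n = 7;
  conversely for k = 1 there is a single suborbit, and for (n,k) = (7,2) both suborbits have
  length 10.\<close>

lemma permutes_image_exists:
  assumes "finite A" "X \<subseteq> A" "Y \<subseteq> A" "card X = card Y"
  obtains p where "p permutes A" "p ` X = Y"
proof -
  have fin: "finite X" "finite Y" "finite (A - X)" "finite (A - Y)"
    using assms finite_subset by auto
  obtain f where f: "bij_betw f X Y"
    using finite_same_card_bij[OF fin(1,2) assms(4)] by blast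
  have "card (A - X) = card (A - Y)"
    using assms by (simp add: card_Diff_subset fin)
  then obtain g where g: "bij_betw g (A - X) (A - Y)"
    using finite_same_card_bij[OF fin(3,4)] by blast
  define p where "p x = (if x \<in> X then f x else if x \<in> A then g x else x)" for x
  have "X \<union> (A - X) = A" "Y \<union> (A - Y) = A"
    using assms(2,3) by auto
  with bij_betw_disjoint_Un[OF f g]
  have "bij_betw (\<lambda>x. if x \<in> X then f x else g x) A A"
    by auto
  then have "bij_betw p A A"
    by (rule bij_betw_cong[THEN iffD1, rotated]) (auto simp: p_def)
  then have "p permutes A"
    by (rule bij_imp_permutes) (use assms(2) in \<open>auto simp: p_def\<close>)
  moreover have "p ` X = Y"
    using f by (simp add: p_def bij_betw_def)
  ultimately show thesis ..
qed

lemma permutes_stabilising_image_exists: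
  assumes "finite S" "B \<subseteq> S" "C \<subseteq> S" "D \<subseteq> S"
    and "card C = card D" "card (C \<inter> B) = card (D \<inter> B)"
  obtains p where "p permutes S" "p ` B = B" "p ` C = D"
proof -
  have fin: "finite B" "finite C" "finite D"
    using assms(1-4) by (meson finite_subset)+
  obtain p1 where p1: "p1 permutes B" "p1 ` (C \<inter> B) = D \<inter> B"
    using permutes_image_exists[OF fin(1) _ _ assms(6)] by blast
  have "card (C - B) = card (D - B)"
    using assms(5,6) fin by (simp add: card_Diff_subset_Int)
  then obtain p2 where p2: "p2 permutes (S - B)" "p2 ` (C - B) = D - B"
    using permutes_image_exists[of "S - B" "C - B" "D - B"] assms(1,3,4) by blast
  have fix2: "p2 ` X = X" if "X \<subseteq> B" for X
    using that p2(1) by (force simp: permutes_not_in)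
  have fix1: "p1 ` (D - B) = D - B"
    using p1(1) by (force simp: permutes_not_in)
  have "p1 \<circ> p2 permutes S"
    using p1(1) p2(1) assms(2) by (auto intro: permutes_compose permutes_subset)
  moreover have "(p1 \<circ> p2) ` B = B"
    unfolding image_comp[symmetric] by (simp add: fix2 permutes_image[OF p1(1)])
  moreover have "(p1 \<circ> p2) ` C = D"
  proof -
    have "C = (C \<inter> B) \<union> (C - B)" "D = (D \<inter> B) \<union> (D - B)" by auto
    then show ?thesis
      by (metis fix1 fix2[OF Int_lower2] image_Un image_comp p1(2) p2(2))
  qed
  ultimately show thesis ..
qed

lemma two_points_same_membership:
  assumes "finite S" "card S \<ge> 5"
  obtains a b where "a \<in> S" "b \<in> S" "a \<noteq> b" "a \<in> B \<longleftrightarrow> b \<in> B" "a \<in> C \<longleftrightarrow> b \<in> C"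
proof -
  have "\<not> inj_on (\<lambda>x. (x \<in> B, x \<in> C)) S"
  proof
    assume "inj_on (\<lambda>x. (x \<in> B, x \<in> C)) S"
    then have "card S \<le> card (UNIV :: (bool \<times> bool) set)"
      by (rule card_inj_on_le) auto
    also have "\<dots> = 4"
      by (simp flip: UNIV_Times_UNIV add: card_cartesian_product card_UNIV_bool)
    finally show False
      using assms(2) by simp
  qed
  then show thesis
    using that unfolding inj_on_def by blast
qed

text \<open>A transposition inside one of the four cells cut out by B and C corrects the parity.\<close>
lemma even_permutes_stabilising_image_exists:
  assumes "finite S" "card S \<ge> 5" "B \<subseteq> S" "C \<subseteq> S" "D \<subseteq> S"
    and "card C = card D" "card (C \<inter> B) = card (D \<inter> B)"
  obtains p where "p permutes S" "evenperm p" "p ` B = B" "p ` C = D"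
proof -
  obtain p where p: "p permutes S" "p ` B = B" "p ` C = D"
    using permutes_stabilising_image_exists[OF assms(1,3-7)] by blast
  show thesis
  proof (cases "evenperm p")
    case True
    with p that show thesis by blast
  next
    case False
    obtain a b where ab: "a \<in> S" "b \<in> S" "a \<noteq> b" "a \<in> B \<longleftrightarrow> b \<in> B" "a \<in> C \<longleftrightarrow> b \<in> C"
      using two_points_same_membership[OF assms(1,2)] by blast
    have "p \<circ> transpose a b permutes S"
      by (rule permutes_compose[OF permutes_swap_id[OF ab(1,2)] p(1)])
    moreover have "evenperm (p \<circ> transpose a b)"
    proof -
      have "permutation p"
        using p(1) assms(1) permutation_permutes by blast
      with False ab(3) show ?thesis
        by (simp add: evenperm_comp evenperm_swap permutation_swap_id)
    qed
    moreover have "(p \<circ> transpose a b) ` B = B" "(p \<circ> transpose a b) ` C = D"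
      unfolding image_comp[symmetric] using ab(4,5) p(2,3) by simp_all
    ultimately show thesis
      using that by blast
  qed
qed

lemma card_subsets_with_card_Int:
  assumes "finite S" "B \<subseteq> S" "i \<le> k"
  shows "card {D. D \<subseteq> S \<and> card D = k \<and> card (D \<inter> B) = i}
    = (card B choose i) * (card (S - B) choose (k - i))"
proof -
  let ?P = "{X. X \<subseteq> B \<and> card X = i}" and ?Q = "{Y. Y \<subseteq> S - B \<and> card Y = k - i}"
  have fin: "finite B" "finite (S - B)"
    using assms(1,2) finite_subset by auto
  have "bij_betw (\<lambda>D. (D \<inter> B, D - B)) {D. D \<subseteq> S \<and> card D = k \<and> card (D \<inter> B) = i} (?P \<times> ?Q)"
  proof (rule bij_betw_byWitness[where f' = "\<lambda>(X, Y). X \<union> Y"])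
    show "(\<lambda>D. (D \<inter> B, D - B)) ` {D. D \<subseteq> S \<and> card D = k \<and> card (D \<inter> B) = i} \<subseteq> ?P \<times> ?Q"
    proof (rule image_subsetI)
      fix D assume "D \<in> {D. D \<subseteq> S \<and> card D = k \<and> card (D \<inter> B) = i}"
      moreover have "finite D"
        using calculation assms(1) finite_subset by blast
      ultimately show "(D \<inter> B, D - B) \<in> ?P \<times> ?Q"
        by (auto simp: card_Diff_subset_Int)
    qed
    show "(\<lambda>(X, Y). X \<union> Y) ` (?P \<times> ?Q) \<subseteq> {D. D \<subseteq> S \<and> card D = k \<and> card (D \<inter> B) = i}"
    proof (rule image_subsetI)
      fix u assume "u \<in> ?P \<times> ?Q"
      then obtain X Y where XY: "u = (X, Y)" "X \<subseteq> B" "Y \<subseteq> S - B" "card X = i" "card Y = k - i"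
        by blast
      then have "finite X" "finite Y" "X \<inter> Y = {}" "(X \<union> Y) \<inter> B = X"
        using fin by (auto intro: finite_subset)
      then show "(\<lambda>(X, Y). X \<union> Y) u \<in> {D. D \<subseteq> S \<and> card D = k \<and> card (D \<inter> B) = i}"
        using XY assms(2,3) by (auto simp: card_Un_disjoint)
    qed
  qed auto
  then show ?thesis
    using fin by (simp add: bij_betw_same_card card_cartesian_product n_subsets)
qed

lemma alt_or_sym_grp_permutes:
  "G = alt_grp n \<or> G = sym_grp n \<Longrightarrow> p \<in> G \<Longrightarrow> p permutes {1..n}"
  unfolding alt_grp_def sym_grp_def by auto

lemma even_permutes_in_alt_or_sym_grp:
  "G = alt_grp n \<or> G = sym_grp n \<Longrightarrow> p permutes {1..n} \<Longrightarrow> evenperm p \<Longrightarrow> p \<in> G"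
  unfolding alt_grp_def sym_grp_def by auto

lemma orbit_stabiliser_k_subsets:
  assumes "n \<ge> 5" "G = alt_grp n \<or> G = sym_grp n" "B \<subseteq> {1..n}" "C \<in> k_subsets n k"
  shows "orbit_of (stabiliser G set_action B) set_action C
    = {D \<in> k_subsets n k. card (D \<inter> B) = card (C \<inter> B)}"
proof (intro equalityI subsetI)
  fix D assume "D \<in> orbit_of (stabiliser G set_action B) set_action C"
  then obtain p where p: "p \<in> G" "p ` B = B" "D = p ` C"
    unfolding orbit_of_def stabiliser_def set_action_def by auto
  have p_perm: "p permutes {1..n}"
    using alt_or_sym_grp_permutes[OF assms(2) p(1)] .
  have C: "C \<subseteq> {1..n}" "card C = k"
    using assms(4) by (auto simp: k_subsets_def)
  have "D \<subseteq> {1..n}"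
    using C(1) p(3) permutes_image[OF p_perm] by auto
  moreover have "card D = k" "card (D \<inter> B) = card (C \<inter> B)"
  proof -
    have "inj p" "D \<inter> B = p ` (C \<inter> B)"
      using permutes_inj[OF p_perm] p(2,3) by (auto simp: image_Int)
    then show "card D = k" "card (D \<inter> B) = card (C \<inter> B)"
      using C(2) p(3) by (simp_all add: card_image inj_on_subset)
  qed
  ultimately show "D \<in> {D \<in> k_subsets n k. card (D \<inter> B) = card (C \<inter> B)}"
    by (simp add: k_subsets_def)
next
  fix D assume "D \<in> {D \<in> k_subsets n k. card (D \<inter> B) = card (C \<inter> B)}"
  then obtain p where "p permutes {1..n}" "evenperm p" "p ` B = B" "p ` C = D"
    using even_permutes_stabilising_image_exists[of "{1..n}" B C D] assms(1,3,4)
    by (auto simp: k_subsets_def)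
  then show "D \<in> orbit_of (stabiliser G set_action B) set_action C"
    using even_permutes_in_alt_or_sym_grp[OF assms(2)]
    unfolding orbit_of_def stabiliser_def set_action_def by auto
qed

lemma transitive_on_k_subsets:
  assumes "n \<ge> 5" "G = alt_grp n \<or> G = sym_grp n" "k \<le> n"
  shows "transitive_on G set_action (k_subsets n k)"
  unfolding transitive_on_def
proof (intro conjI ballI)
  show "k_subsets n k \<noteq> {}"
    using assms(3) by (auto simp: k_subsets_def intro!: exI[of _ "{1..k}"])
next
  fix C D assume "C \<in> k_subsets n k" "D \<in> k_subsets n k"
  then obtain p where "p permutes {1..n}" "evenperm p" "p ` C = D"
    using even_permutes_stabilising_image_exists[of "{1..n}" "{}" C D] assms(1)
    by (auto simp: k_subsets_def)
  then show "\<exists>g\<in>G. set_action g C = D"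
    using even_permutes_in_alt_or_sym_grp[OF assms(2)] by (auto simp: set_action_def)
qed

lemma card_orbit_stabiliser_k_subsets:
  assumes "n \<ge> 5" "G = alt_grp n \<or> G = sym_grp n" "B \<in> k_subsets n k" "C \<in> k_subsets n k"
  shows "card (orbit_of (stabiliser G set_action B) set_action C)
    = (k choose card (C \<inter> B)) * ((n - k) choose (k - card (C \<inter> B)))"
proof -
  have B: "B \<subseteq> {1..n}" "card B = k"
    using assms(3) by (auto simp: k_subsets_def)
  then have "card (C \<inter> B) \<le> k"
    by (metis card_mono finite_subset finite_atLeastAtMost inf_le2)
  moreover have "card ({1..n} - B) = n - k"
    using B by (simp add: card_Diff_subset finite_subset)
  ultimately show ?thesis
    using orbit_stabiliser_k_subsets[OF assms(1,2) B(1) assms(4)]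
      card_subsets_with_card_Int[of "{1..n}" B "card (C \<inter> B)" k] B
    by (simp add: k_subsets_def conj_assoc)
qed

lemma card_Int_less_if_card_eq:
  assumes "finite A" "finite B" "card A = card B" "A \<noteq> B"
  shows "card (A \<inter> B) < card B"
proof -
  have "A \<inter> B \<subset> B"
    using assms card_subset_eq by (metis Int_lower1 Int_lower2 inf.absorb_iff2 psubsetI)
  then show ?thesis
    by (rule psubset_card_mono[OF assms(2)])
qed

lemma three_halves_transitive_k_subsets_iff:
  assumes "n \<ge> 5" "G = alt_grp n \<or> G = sym_grp n" "2 * k \<le> n"
  shows "three_halves_transitive G set_action (k_subsets n k) \<longleftrightarrow>
    (\<forall>i<k. \<forall>j<k. (k choose i) * ((n - k) choose (k - i)) = (k choose j) * ((n - k) choose (k - j))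
      \<and> (k choose i) * ((n - k) choose (k - i)) > 1)"
    (is "_ \<longleftrightarrow> (\<forall>i<k. \<forall>j<k. ?f i = ?f j \<and> ?f i > 1)")
proof -
  let ?\<Omega> = "k_subsets n k"
  let ?orb = "\<lambda>B C. card (orbit_of (stabiliser G set_action B) set_action C)"
  have orb: "?orb B C = ?f (card (C \<inter> B))" if "B \<in> ?\<Omega>" "C \<in> ?\<Omega>" for B C
    using card_orbit_stabiliser_k_subsets[OF assms(1,2) that] .
  have meet: "card (C \<inter> B) < k" if "B \<in> ?\<Omega>" "C \<in> ?\<Omega> - {B}" for B C
    using that card_Int_less_if_card_eq[of C B]
    by (auto simp: k_subsets_def intro: finite_subset)
  have B0: "{1..k} \<in> ?\<Omega>"
    using assms(3) by (simp add: k_subsets_def)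
  have realise: "\<exists>C \<in> ?\<Omega> - {{1..k}}. card (C \<inter> {1..k}) = i" if "i < k" for i
  proof -
    have "{1..n} - {1..k} = {k<..n}"
      by auto
    then have "card {C. C \<subseteq> {1..n} \<and> card C = k \<and> card (C \<inter> {1..k}) = i} = ?f i"
      using card_subsets_with_card_Int[of "{1..n}" "{1..k}" i k] that assms(3) by simp
    moreover have "?f i > 0"
      using that assms(3) by simp
    ultimately obtain C where "C \<subseteq> {1..n}" "card C = k" "card (C \<inter> {1..k}) = i"
      by (metis (mono_tags, lifting) card.empty empty_Collect_eq less_irrefl)
    moreover have "C \<noteq> {1..k}"
      using calculation(3) that by auto
    ultimately show ?thesis
      by (auto simp: k_subsets_def)
  qed
  show ?thesis
  proof
    assume H: "three_halves_transitive G set_action ?\<Omega>"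
    show "\<forall>i<k. \<forall>j<k. ?f i = ?f j \<and> ?f i > 1"
    proof (intro allI impI)
      fix i j assume "i < k" "j < k"
      obtain C where C: "C \<in> ?\<Omega> - {{1..k}}" "card (C \<inter> {1..k}) = i"
        using realise[OF \<open>i < k\<close>] by blast
      obtain D where D: "D \<in> ?\<Omega> - {{1..k}}" "card (D \<inter> {1..k}) = j"
        using realise[OF \<open>j < k\<close>] by blast
      have "?orb {1..k} C = ?orb {1..k} D \<and> ?orb {1..k} C > 1"
        using H[unfolded three_halves_transitive_def, THEN conjunct2, rule_format, OF B0 C(1) D(1)] .
      then show "?f i = ?f j \<and> ?f i > 1"
        using orb[OF B0] C D by simp
    qed
  next
    assume H: "\<forall>i<k. \<forall>j<k. ?f i = ?f j \<and> ?f i > 1"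
    show "three_halves_transitive G set_action ?\<Omega>"
      unfolding three_halves_transitive_def
    proof (intro conjI ballI transitive_on_k_subsets[OF assms(1,2)])
      fix B C D assume B: "B \<in> ?\<Omega>" and C: "C \<in> ?\<Omega> - {B}" and D: "D \<in> ?\<Omega> - {B}"
      have "?f (card (C \<inter> B)) = ?f (card (D \<inter> B)) \<and> ?f (card (C \<inter> B)) > 1"
        using H meet[OF B C] meet[OF B D] by blast
      then show "?orb B C = ?orb B D" "?orb B C > 1"
        using orb[OF B] C D by simp_all
    qed (use assms(3) in simp)
  qed
qed

lemma choose_two_product_eq:
  fixes k m :: nat
  assumes "2 \<le> k" "k < m" "k * m = (k choose 2) * (m choose 2)"
  shows "k = 2 \<and> m = 5"
proof -
  have double_choose_two: "2 * (x choose 2) = x * (x - 1)" for x :: nat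
  proof -
    have "even (x * (x - 1))"
      by (cases "even x") auto
    then show ?thesis
      by (simp add: choose_two)
  qed
  have "4 * (k * m) = (2 * (k choose 2)) * (2 * (m choose 2))"
    using assms(3) by simp
  also have "\<dots> = (k * m) * ((k - 1) * (m - 1))"
    by (simp only: double_choose_two ac_simps)
  finally have "(k - 1) * (m - 1) = 4"
    using assms(1,2) by simp
  moreover have "(k - 1) * (m - 1) \<ge> 2 * 3" if "k \<noteq> 2"
    using that assms(1,2) by (intro mult_le_mono) auto
  ultimately show ?thesis
    by (cases "k = 2") auto
qed

lemma binomial_products_constant_iff:
  fixes n k :: nat
  assumes "1 \<le> k" "2 * k < n"
  shows "(\<forall>i<k. \<forall>j<k. (k choose i) * ((n - k) choose (k - i)) = (k choose j) * ((n - k) choose (k - j))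
      \<and> (k choose i) * ((n - k) choose (k - i)) > 1) \<longleftrightarrow> k = 1 \<or> (n = 7 \<and> k = 2)"
proof
  assume H: "\<forall>i<k. \<forall>j<k. (k choose i) * ((n - k) choose (k - i)) = (k choose j) * ((n - k) choose (k - j))
      \<and> (k choose i) * ((n - k) choose (k - i)) > 1"
  show "k = 1 \<or> (n = 7 \<and> k = 2)"
  proof (cases "k = 1")
    case False
    then have k: "2 \<le> k"
      using assms(1) by simp
    then have "(k choose (k - 1)) * (n - k) = (k choose (k - 2)) * ((n - k) choose 2)"
      using H[rule_format, of "k - 1" "k - 2"] by simp
    then have "k * (n - k) = (k choose 2) * ((n - k) choose 2)"
      using k by (simp add: binomial_symmetric[symmetric])
    moreover have "k < n - k"
      using assms(2) by simp
    ultimately have "k = 2 \<and> n - k = 5"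
      using choose_two_product_eq[OF k] by blast
    then show ?thesis
      by linarith
  qed simp
next
  assume "k = 1 \<or> (n = 7 \<and> k = 2)"
  then show "\<forall>i<k. \<forall>j<k. (k choose i) * ((n - k) choose (k - i)) = (k choose j) * ((n - k) choose (k - j))
      \<and> (k choose i) * ((n - k) choose (k - i)) > 1"
    using assms(2) by (elim disjE) (simp, clarsimp simp: less_2_cases_iff choose_two)
qed

theorem lemma4p3:
  fixes n k :: nat and G :: "(nat \<Rightarrow> nat) set"
  assumes "n \<ge> 5" and "1 \<le> k" and "2 * k < n"
    and "G = alt_grp n \<or> G = sym_grp n"
  shows "three_halves_transitive G set_action (k_subsets n k) \<longleftrightarrow> (k = 1 \<or> (n = 7 \<and> k = 2))"
proof -
  have "2 * k \<le> n"
    using assms(3) by simp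
  then show ?thesis
    using three_halves_transitive_k_subsets_iff[OF assms(1,4)]
      binomial_products_constant_iff[OF assms(2,3)] by blast
qed

end
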